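(* Let $H_0$ and $H_1^1,\dots,H_1^\Gamma$ be Hermitian operators on a finite-dimensional Hilbert space, let $\alpha\in\mathbb{R}$, let $H_1=\sum_{\gamma=1}^\Gamma H_1^\gamma$ and $H=H_0+\alpha H_1$. For $t\ge 0$ define $$U_{\rm apx}(t):=e^{-itH_0}\prod_{\gamma=1}^{\Gamma}\left(e^{itH_0}e^{-it(H_0+\alpha H_1^\gamma)}\right),$$ where the product is ordered with the factor $\gamma=1$ leftmost. Then $U_{\rm apx}(t)$ approximates $U(t)=e^{-itH}$ with error $$\|U(t)-U_{\rm apx}(t)\|\leq \alpha^2\int_{0}^{t}dv\int_{0}^{v}ds\sum_{1\le\gamma_1<\gamma_2\le\Gamma}\|[H_{1}^{\gamma_1}(s),H_{1}^{\gamma_2}(v)]\|,$$ where $H_1^\gamma(s):=e^{isH_0}H_1^\gamma e^{-isH_0}$. In particular, for sufficiently small time $t$ this error is $O(\alpha^2t^2)$.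
   Context: $\|\cdot\|$ denotes the operator (spectral) norm. *)

theory Defs
  imports "HOL-Analysis.Analysis"
begin

type_synonym 'n cmat = "complex ^ 'n ^ 'n"

definition mpow :: "'n::finite cmat \<Rightarrow> nat \<Rightarrow> 'n cmat" where
  "mpow A k = (((**) A) ^^ k) (mat 1)"

definition mexp :: "'n::finite cmat \<Rightarrow> 'n cmat" where
  "mexp A = (\<Sum>k. (1 / fact k) *\<^sub>R mpow A k)"

definition cscale :: "complex \<Rightarrow> 'n::finite cmat \<Rightarrow> 'n cmat" where
  "cscale c A = (\<chi> i j. c * A $ i $ j)"

definition adj :: "'n::finite cmat \<Rightarrow> 'n cmat" where
  "adj A = (\<chi> i j. cnj (A $ j $ i))"

definition hermitian :: "'n::finite cmat \<Rightarrow> bool" where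
  "hermitian A \<longleftrightarrow> adj A = A"

text \<open>Operator (spectral) norm: norm on complex^'n is the Euclidean (l2) norm.\<close>
definition opnorm :: "'n::finite cmat \<Rightarrow> real" where
  "opnorm A = onorm (\<lambda>v. A *v v)"

definition commutator :: "'n::finite cmat \<Rightarrow> 'n cmat \<Rightarrow> 'n cmat" where
  "commutator A B = A ** B - B ** A"

definition oprod :: "'n::finite cmat list \<Rightarrow> 'n cmat" where
  "oprod As = foldr (**) As (mat 1)"

definition interaction :: "'n::finite cmat \<Rightarrow> 'n cmat \<Rightarrow> real \<Rightarrow> 'n cmat" where
  "interaction H0 H s = mexp (cscale (\<i> * s) H0) ** H ** mexp (cscale (- \<i> * s) H0)"

definition U_exact :: "'n::finite cmat \<Rightarrow> (nat \<Rightarrow> 'n cmat) \<Rightarrow> nat \<Rightarrow> real \<Rightarrow> real \<Rightarrow> 'n cmat" where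
  "U_exact H0 H1 \<Gamma> \<alpha> t =
     mexp (cscale (- \<i> * t) (H0 + cscale (of_real \<alpha>) (\<Sum>\<gamma>\<in>{1..\<Gamma>}. H1 \<gamma>)))"

definition U_apx :: "'n::finite cmat \<Rightarrow> (nat \<Rightarrow> 'n cmat) \<Rightarrow> nat \<Rightarrow> real \<Rightarrow> real \<Rightarrow> 'n cmat" where
  "U_apx H0 H1 \<Gamma> \<alpha> t =
     mexp (cscale (- \<i> * t) H0) **
     oprod (map (\<lambda>\<gamma>. mexp (cscale (\<i> * t) H0) **
                       mexp (cscale (- \<i> * t) (H0 + cscale (of_real \<alpha>) (H1 \<gamma>))))
                [1..<\<Gamma>+1])"

end

theory Submission
  imports Defs
begin

(* Write A = -i H0, B_g = -i alpha H1^g and W_C(t) = e^{-tA} e^{t(A+C)} for the evolution generated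
   by C in the interaction picture of A.  Then U(t) = e^{tA} W_{B_1+...+B_Gamma}(t) and
   U_apx(t) = e^{tA} W_{B_1}(t) ... W_{B_Gamma}(t), so the error telescopes into the terms
   W_{C+D}(t) - W_C(t) W_D(t) with C = B_1 + ... + B_{g-1} and D = B_g.  Variation of constants
   bounds such a term by the integral over v of the commutator [W_C(v), D(v)], and, once more, this
   commutator by the integral over s in [0, v] of [D(v), C(s)].  Only the fact that all exponentials
   involved are contractions (they are unitary) enters, so the argument is carried out in an
   arbitrary real Banach algebra. *)

section \<open>Interaction picture in a Banach algebra\<close>

lemma norm_mult_le_of_norm_le_1_left:
  fixes a x :: "'a::real_normed_algebra"
  assumes "norm a \<le> 1"
  shows "norm (a * x) \<le> norm x"
  using norm_mult_ineq[of a x] mult_right_mono[OF assms norm_ge_zero[of x]] by simp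

lemma norm_mult_le_of_norm_le_1_right:
  fixes b x :: "'a::real_normed_algebra"
  assumes "norm b \<le> 1"
  shows "norm (x * b) \<le> norm x"
  using norm_mult_ineq[of x b] mult_left_mono[OF assms norm_ge_zero[of x]] by simp

lemma norm_commutator_le:
  fixes x y :: "'a::real_normed_algebra"
  shows "norm (x * y - y * x) \<le> 2 * norm x * norm y"
proof -
  have "norm (x * y - y * x) \<le> norm x * norm y + norm y * norm x"
    by (rule order_trans[OF norm_triangle_ineq4 add_mono[OF norm_mult_ineq norm_mult_ineq]])
  then show ?thesis
    by (simp add: mult.commute[of "norm y"] mult.assoc)
qed

lemma norm_diff_le_integral_of_derivative_bound:
  fixes f :: "real \<Rightarrow> 'a::banach"
  assumes "0 \<le> t"
    and "\<And>s. s \<in> {0..t} \<Longrightarrow> (f has_vector_derivative f' s) (at s within {0..t})"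
    and h: "continuous_on {0..t} h"
    and bound: "\<And>s. s \<in> {0..t} \<Longrightarrow> norm (f' s) \<le> h s"
  shows "norm (f t - f 0) \<le> integral {0..t} h"
proof -
  have "(f' has_integral f t - f 0) {0..t}"
    by (rule fundamental_theorem_of_calculus) (use assms in auto)
  then have "f' integrable_on {0..t}" and "f t - f 0 = integral {0..t} f'"
    by (auto simp: has_integral_iff)
  moreover have "h integrable_on {0..t}"
    using h by (rule integrable_continuous_real)
  ultimately show ?thesis
    by (metis bound integral_norm_bound_integral)
qed

lemma continuous_on_parametric_integral:
  fixes F :: "real \<Rightarrow> real \<Rightarrow> 'a::banach"
  assumes F: "continuous_on UNIV (\<lambda>(s, v). F s v)"
  shows "continuous_on {a..b} (\<lambda>v. integral {a..v} (\<lambda>s. F s v))"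
proof -
  have F_comp: "continuous_on S (\<lambda>x. F (f x) (g x))"
    if "continuous_on S f" "continuous_on S g" for S and f g :: "'b::topological_space \<Rightarrow> real"
    using continuous_on_compose2[OF F continuous_on_Pair[OF that]] by simp
  have F_min_cont: "continuous_on ({a..b} \<times> cbox a b) (\<lambda>(v, s). F (min s v) v)"
    unfolding split_beta by (intro F_comp continuous_intros)
  have "integral {a..v} (\<lambda>s. F s v) = integral {a..b} (\<lambda>s. F (min s v) v) - (b - v) *\<^sub>R F v v"
    if v: "v \<in> {a..b}" for v
  proof -
    have "(\<lambda>s. F (min s v) v) integrable_on {a..b}"
      by (intro integrable_continuous_real F_comp continuous_intros)
    then have "integral {a..v} (\<lambda>s. F (min s v) v) + integral {v..b} (\<lambda>s. F (min s v) v)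
          = integral {a..b} (\<lambda>s. F (min s v) v)"
      using v by (intro Henstock_Kurzweil_Integration.integral_combine) auto
    moreover have "integral {a..v} (\<lambda>s. F (min s v) v) = integral {a..v} (\<lambda>s. F s v)"
      by (rule integral_cong) auto
    moreover have "integral {v..b} (\<lambda>s. F (min s v) v) = (b - v) *\<^sub>R F v v"
      using v by (subst integral_cong[of _ _ "\<lambda>_. F v v"]) auto
    ultimately show ?thesis by (simp add: algebra_simps)
  qed
  moreover have "continuous_on {a..b} (\<lambda>v. integral {a..b} (\<lambda>s. F (min s v) v) - (b - v) *\<^sub>R F v v)"
    using integral_continuous_on_param[OF F_min_cont]
    by (simp add: cbox_interval) (intro continuous_intros F_comp)
  ultimately show ?thesis
    using continuous_on_eq by (metis (no_types, lifting))
qed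

lemma integral_parametric_integral_le:
  fixes F :: "real \<Rightarrow> real \<Rightarrow> real"
  assumes F: "continuous_on UNIV (\<lambda>(s, v). F s v)" and bound: "\<And>s v. F s v \<le> C" and "0 \<le> t"
  shows "integral {0..t} (\<lambda>v. integral {0..v} (\<lambda>s. F s v)) \<le> C * t\<^sup>2 / 2"
proof -
  have integrable: "(\<lambda>v. integral {0..v} (\<lambda>s. F s v)) integrable_on {0..t}"
    by (intro integrable_continuous_real continuous_on_parametric_integral F)
  have "((\<lambda>v. C * v) has_integral C * t\<^sup>2 / 2 - C * 0\<^sup>2 / 2) {0..t}"
  proof (rule fundamental_theorem_of_calculus)
    show "((\<lambda>v. C * v\<^sup>2 / 2) has_vector_derivative C * v) (at v within {0..t})" for v
      unfolding has_real_derivative_iff_has_vector_derivative[symmetric]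
      by (auto intro!: derivative_eq_intros)
  qed (use \<open>0 \<le> t\<close> in simp)
  then have FTC: "((\<lambda>v. C * v) has_integral C * t\<^sup>2 / 2) {0..t}"
    by simp
  have inner: "integral {0..v} (\<lambda>s. F s v) \<le> C * v" if "v \<in> {0..t}" for v
  proof -
    have "integral {0..v} (\<lambda>s. F s v) \<le> integral {0..v} (\<lambda>s. C)"
      using continuous_on_compose2[OF F continuous_on_Pair[OF continuous_on_id continuous_on_const]]
      by (intro integral_le integrable_continuous_real bound) auto
    then show ?thesis using that by (simp add: mult.commute)
  qed
  from FTC show ?thesis
    by (rule has_integral_le[OF integrable_integral[OF integrable]]) (use inner in simp)
qed

lemma norm_diff_prod_list_le:
  fixes x y :: "nat \<Rightarrow> 'a::real_normed_algebra_1"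
  assumes "x 0 = 1"
    and "\<And>k. k \<in> {1..n} \<Longrightarrow> norm (y k) \<le> 1"
    and "\<And>k. k < n \<Longrightarrow> norm (x (Suc k) - x k * y (Suc k)) \<le> e (Suc k)"
  shows "norm (x n - (\<Prod>k\<leftarrow>[1..<n+1]. y k)) \<le> sum e {1..n}"
  using assms(2,3)
proof (induction n)
  case 0
  then show ?case using assms(1) by simp
next
  case (Suc n)
  let ?P = "\<Prod>k\<leftarrow>[1..<n+1]. y k"
  have "x (Suc n) - (\<Prod>k\<leftarrow>[1..<Suc n+1]. y k) = (x (Suc n) - x n * y (Suc n)) + (x n - ?P) * y (Suc n)"
    by (simp add: algebra_simps)
  then have "norm (x (Suc n) - (\<Prod>k\<leftarrow>[1..<Suc n+1]. y k))
      \<le> norm (x (Suc n) - x n * y (Suc n)) + norm ((x n - ?P) * y (Suc n))"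
    by (metis norm_triangle_ineq)
  also have "norm ((x n - ?P) * y (Suc n)) \<le> norm (x n - ?P)"
    by (rule norm_mult_le_of_norm_le_1_right) (use Suc.prems in auto)
  also have "norm (x n - ?P) \<le> sum e {1..n}"
    using Suc by auto
  finally show ?case using Suc.prems(2)[of n] by simp
qed

lemma sum_ordered_pairs:
  fixes n :: nat
  shows "(\<Sum>b\<in>{1..n}. \<Sum>a\<in>{1..<b}. f a b) = (\<Sum>(a, b) \<in> {(a, b). 1 \<le> a \<and> a < b \<and> b \<le> n}. f a b)"
proof -
  have "(\<Sum>b\<in>{1..n}. \<Sum>a\<in>{1..<b}. f a b) = (\<Sum>(b, a) \<in> Sigma {1..n} (\<lambda>b. {1..<b}). f a b)"
    by (rule sum.Sigma) auto
  also have "\<dots> = (\<Sum>(a, b) \<in> {(a, b). 1 \<le> a \<and> a < b \<and> b \<le> n}. f a b)"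
    by (rule sum.reindex_bij_witness[of _ "\<lambda>(a, b). (b, a)" "\<lambda>(b, a). (a, b)"]) auto
  finally show ?thesis .
qed

lemma sum_integral_parametric_integral_eq:
  fixes F :: "nat \<Rightarrow> nat \<Rightarrow> real \<Rightarrow> real \<Rightarrow> real"
  assumes F: "\<And>a b. continuous_on UNIV (\<lambda>(s, v). F a b s v)"
  shows "(\<Sum>b\<in>{1..n}. integral {0..t} (\<lambda>v. integral {0..v} (\<lambda>s. \<Sum>a\<in>{1..<b}. F a b s v)))
    = integral {0..t} (\<lambda>v. integral {0..v} (\<lambda>s.
        \<Sum>(a, b) \<in> {(a, b). 1 \<le> a \<and> a < b \<and> b \<le> n}. F a b s v))"
proof -
  have F_sum: "continuous_on UNIV (\<lambda>(s, v). \<Sum>a\<in>J. F a b s v)" for J b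
    using F by (simp add: split_beta continuous_on_sum)
  have F_sum_left: "continuous_on S (\<lambda>s. \<Sum>a\<in>J. F a b s v)" for S J b v
    using continuous_on_compose2[OF F_sum continuous_on_Pair[OF continuous_on_id continuous_on_const]]
    by simp
  have "(\<Sum>b\<in>{1..n}. integral {0..t} (\<lambda>v. integral {0..v} (\<lambda>s. \<Sum>a\<in>{1..<b}. F a b s v)))
      = integral {0..t} (\<lambda>v. \<Sum>b\<in>{1..n}. integral {0..v} (\<lambda>s. \<Sum>a\<in>{1..<b}. F a b s v))"
    by (intro integral_sum[symmetric] integrable_continuous_real continuous_on_parametric_integral
        F_sum finite_atLeastAtMost)
  also have "\<dots> = integral {0..t} (\<lambda>v. integral {0..v} (\<lambda>s. \<Sum>b\<in>{1..n}. \<Sum>a\<in>{1..<b}. F a b s v))"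
    by (intro integral_cong integral_sum[symmetric] integrable_continuous_real F_sum_left) auto
  finally show ?thesis
    unfolding sum_ordered_pairs .
qed

definition generates_contractions :: "'a::{real_normed_algebra_1,banach} \<Rightarrow> bool"
  where "generates_contractions A \<longleftrightarrow> (\<forall>t. norm (exp (t *\<^sub>R A)) \<le> 1)"

lemma generates_contractionsD:
  assumes "generates_contractions A"
  shows "norm (exp (t *\<^sub>R A)) \<le> 1" and "norm (exp (- (t *\<^sub>R A))) \<le> 1"
  using assms unfolding generates_contractions_def by (auto simp flip: scaleR_minus_left)

lemma exp_mult_exp_minus_cancel:
  fixes x y :: "'a::{real_normed_algebra_1,banach}"
  shows "exp x * (exp (- x) * y) = y" and "exp (- x) * (exp x * y) = y"
  using exp_minus_inverse[of x] exp_minus_inverse[of "- x"] by (simp_all flip: mult.assoc)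

lemma continuous_on_exp_scaleR [continuous_intros]:
  fixes A :: "'a::{real_normed_algebra_1,banach}"
  assumes "continuous_on S f"
  shows "continuous_on S (\<lambda>x. exp (f x *\<^sub>R A))"
proof -
  have "continuous_on UNIV (\<lambda>t. exp (t *\<^sub>R A))"
    by (rule continuous_on_vector_derivative) (rule exp_scaleR_has_vector_derivative_right)
  from continuous_on_compose2[OF this assms] show ?thesis by simp
qed

lemma exp_minus_scaleR_has_vector_derivative:
  fixes A :: "'a::{real_normed_algebra_1,banach}"
  shows "((\<lambda>s. exp (- (s *\<^sub>R A))) has_vector_derivative exp (- (s *\<^sub>R A)) * - A) (at s)"
    and "((\<lambda>s. exp (- (s *\<^sub>R A))) has_vector_derivative - A * exp (- (s *\<^sub>R A))) (at s)"
  using exp_scaleR_has_vector_derivative_right[of "- A" s UNIV]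
    exp_scaleR_has_vector_derivative_left[of "- A" s]
  by (simp_all flip: scaleR_minus_right)

(* With A = -i H0, interaction_picture A C s is e^{isH0} C e^{-isH0}, the paper's C(s). *)
definition interaction_picture :: "'a \<Rightarrow> 'a \<Rightarrow> real \<Rightarrow> 'a::{real_normed_algebra_1,banach}"
  where "interaction_picture A C s = exp (- (s *\<^sub>R A)) * C * exp (s *\<^sub>R A)"

definition interaction_evolution :: "'a \<Rightarrow> 'a \<Rightarrow> real \<Rightarrow> 'a::{real_normed_algebra_1,banach}"
  where "interaction_evolution A C s = exp (- (s *\<^sub>R A)) * exp (s *\<^sub>R (A + C))"

lemma interaction_picture_add:
  "interaction_picture A (C + D) s = interaction_picture A C s + interaction_picture A D s"
  by (simp add: interaction_picture_def algebra_simps)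

lemma interaction_picture_sum:
  "interaction_picture A (sum C I) s = (\<Sum>a\<in>I. interaction_picture A (C a) s)"
  by (simp add: interaction_picture_def sum_distrib_left sum_distrib_right)

lemma continuous_on_interaction_picture [continuous_intros]:
  "continuous_on S f \<Longrightarrow> continuous_on S (\<lambda>x. interaction_picture A C (f x))"
  unfolding interaction_picture_def by (simp flip: scaleR_minus_left) (intro continuous_intros)

lemma norm_interaction_picture_le:
  assumes "generates_contractions A"
  shows "norm (interaction_picture A C s) \<le> norm C"
  unfolding interaction_picture_def
  using assms generates_contractionsD norm_mult_le_of_norm_le_1_left norm_mult_le_of_norm_le_1_right
  by (metis order_trans)

lemma norm_interaction_evolution_le:
  assumes "generates_contractions A" and "generates_contractions (A + C)"
  shows "norm (interaction_evolution A C s) \<le> 1"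
  unfolding interaction_evolution_def
  using assms generates_contractionsD norm_mult_le_of_norm_le_1_left by (metis order_trans)

lemma has_vector_derivative_interaction_evolution:
  "(interaction_evolution A C has_vector_derivative
      interaction_picture A C s * interaction_evolution A C s) (at s)"
proof -
  let ?E = "exp (s *\<^sub>R (A + C))"
  have "(interaction_evolution A C has_vector_derivative
      exp (- (s *\<^sub>R A)) * ((A + C) * ?E) + exp (- (s *\<^sub>R A)) * - A * ?E) (at s)"
    unfolding interaction_evolution_def [abs_def]
    by (intro has_vector_derivative_mult exp_scaleR_has_vector_derivative_left
        exp_minus_scaleR_has_vector_derivative)
  also have "exp (- (s *\<^sub>R A)) * ((A + C) * ?E) + exp (- (s *\<^sub>R A)) * - A * ?E
      = interaction_picture A C s * interaction_evolution A C s"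
    by (simp add: interaction_picture_def interaction_evolution_def algebra_simps
        exp_mult_exp_minus_cancel)
  finally show ?thesis .
qed

lemma has_vector_derivative_interaction_evolution_inverse:
  "((\<lambda>s. exp (- (s *\<^sub>R (A + C))) * exp (s *\<^sub>R A)) has_vector_derivative
      - (exp (- (s *\<^sub>R (A + C))) * exp (s *\<^sub>R A) * interaction_picture A C s)) (at s)"
proof -
  let ?N = "exp (- (s *\<^sub>R (A + C)))"
  have "((\<lambda>s. exp (- (s *\<^sub>R (A + C))) * exp (s *\<^sub>R A)) has_vector_derivative
      ?N * (A * exp (s *\<^sub>R A)) + ?N * - (A + C) * exp (s *\<^sub>R A)) (at s)"
    by (intro has_vector_derivative_mult exp_scaleR_has_vector_derivative_left
        exp_minus_scaleR_has_vector_derivative)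
  moreover have "?N * exp (s *\<^sub>R A) * interaction_picture A C s = ?N * C * exp (s *\<^sub>R A)"
    by (simp add: interaction_picture_def mult.assoc exp_mult_exp_minus_cancel)
  ultimately show ?thesis
    by (simp add: algebra_simps)
qed

(* Variation of constants: W(s)^{-1} V(s) has derivative W(s)^{-1} E(s). *)
lemma norm_diff_interaction_evolution_mult_le:
  assumes A: "generates_contractions A" and AC: "generates_contractions (A + C)" and "0 \<le> t"
    and V': "\<And>s. (V has_vector_derivative interaction_picture A C s * V s + E s) (at s)"
    and h: "continuous_on {0..t} h"
    and E: "\<And>s. s \<in> {0..t} \<Longrightarrow> norm (E s) \<le> h s"
  shows "norm (V t - interaction_evolution A C t * V 0) \<le> integral {0..t} h"
proof -
  let ?W = "interaction_evolution A C"
  define R where "R s = exp (- (s *\<^sub>R (A + C))) * exp (s *\<^sub>R A)" for s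
  have WR: "?W s * (R s * x) = x" for s x
    by (simp add: interaction_evolution_def R_def mult.assoc exp_mult_exp_minus_cancel)
  have R': "(R has_vector_derivative - (R s * interaction_picture A C s)) (at s)" for s
    unfolding R_def [abs_def] by (rule has_vector_derivative_interaction_evolution_inverse)
  define G where "G s = R s * V s" for s
  have "norm (G t - G 0) \<le> integral {0..t} h"
  proof (rule norm_diff_le_integral_of_derivative_bound[OF \<open>0 \<le> t\<close> _ h])
    show "(G has_vector_derivative R s * E s) (at s within {0..t})" for s
    proof -
      have "(G has_vector_derivative R s * (interaction_picture A C s * V s + E s)
          + - (R s * interaction_picture A C s) * V s) (at s)"
        unfolding G_def [abs_def] by (intro has_vector_derivative_mult R' V')
      then show ?thesis
        by (simp add: algebra_simps has_vector_derivative_at_within)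
    qed
    show "norm (R s * E s) \<le> h s" if "s \<in> {0..t}" for s
      using generates_contractionsD[OF A] generates_contractionsD[OF AC] E[OF that]
        norm_mult_le_of_norm_le_1_left unfolding R_def by (metis mult.assoc order_trans)
  qed
  moreover have "V t - ?W t * V 0 = ?W t * (G t - G 0)"
  proof -
    have "?W t * G t = V t" and "G 0 = V 0"
      using WR by (simp_all add: G_def R_def)
    then show ?thesis by (simp add: right_diff_distrib)
  qed
  moreover have "norm (?W t * (G t - G 0)) \<le> norm (G t - G 0)"
    by (rule norm_mult_le_of_norm_le_1_left[OF norm_interaction_evolution_le[OF A AC]])
  ultimately show ?thesis by simp
qed

lemma norm_commutator_interaction_evolution_le:
  assumes A: "generates_contractions A" and AC: "generates_contractions (A + C)" and "0 \<le> t"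
    and h: "continuous_on {0..t} h"
    and bound: "\<And>s. s \<in> {0..t} \<Longrightarrow>
      norm (X * interaction_picture A C s - interaction_picture A C s * X) \<le> h s"
  shows "norm (X * interaction_evolution A C t - interaction_evolution A C t * X) \<le> integral {0..t} h"
proof -
  let ?W = "interaction_evolution A C" and ?C = "interaction_picture A C"
  have "norm (X * ?W t - ?W t * (X * ?W 0)) \<le> integral {0..t} h"
  proof (rule norm_diff_interaction_evolution_mult_le[OF A AC \<open>0 \<le> t\<close> _ h])
    show "((\<lambda>s. X * ?W s) has_vector_derivative
        ?C s * (X * ?W s) + (X * ?C s - ?C s * X) * ?W s) (at s)" for s
      using has_vector_derivative_mult_right[OF has_vector_derivative_interaction_evolution, of X]
      by (simp add: algebra_simps)
    show "norm ((X * ?C s - ?C s * X) * ?W s) \<le> h s" if "s \<in> {0..t}" for s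
      using norm_mult_le_of_norm_le_1_right[OF norm_interaction_evolution_le[OF A AC]] bound[OF that]
      by (rule order_trans)
  qed
  then show ?thesis by (simp add: interaction_evolution_def)
qed

lemma norm_interaction_evolution_add_le:
  assumes A: "generates_contractions A" and AC: "generates_contractions (A + C)"
    and AD: "generates_contractions (A + D)" and ACD: "generates_contractions (A + (C + D))"
    and "0 \<le> t" and g: "continuous_on {0..t} g"
    and bound: "\<And>v. v \<in> {0..t} \<Longrightarrow>
      norm (interaction_evolution A C v * interaction_picture A D v
        - interaction_picture A D v * interaction_evolution A C v) \<le> g v"
  shows "norm (interaction_evolution A (C + D) t
      - interaction_evolution A C t * interaction_evolution A D t) \<le> integral {0..t} g"
proof -
  let ?WC = "interaction_evolution A C" and ?WD = "interaction_evolution A D"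
  let ?E = "\<lambda>s. (?WC s * interaction_picture A D s - interaction_picture A D s * ?WC s) * ?WD s"
  have "norm (?WC t * ?WD t - interaction_evolution A (C + D) t * (?WC 0 * ?WD 0)) \<le> integral {0..t} g"
  proof (rule norm_diff_interaction_evolution_mult_le[OF A ACD \<open>0 \<le> t\<close> _ g])
    show "((\<lambda>s. ?WC s * ?WD s) has_vector_derivative
        interaction_picture A (C + D) s * (?WC s * ?WD s) + ?E s) (at s)" for s
      using has_vector_derivative_mult[OF has_vector_derivative_interaction_evolution[of A C s]
          has_vector_derivative_interaction_evolution[of A D s]]
      by (simp add: interaction_picture_add algebra_simps)
    show "norm (?E s) \<le> g s" if "s \<in> {0..t}" for s
      using norm_mult_le_of_norm_le_1_right[OF norm_interaction_evolution_le[OF A AD]] bound[OF that]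
      by (rule order_trans)
  qed
  then show ?thesis by (simp add: interaction_evolution_def norm_minus_commute)
qed

lemma norm_interaction_evolution_sum_add_le:
  fixes B :: "'i \<Rightarrow> 'a::{real_normed_algebra_1,banach}"
  assumes A: "generates_contractions A" and AC: "generates_contractions (A + sum B I)"
    and AD: "generates_contractions (A + D)" and ACD: "generates_contractions (A + (sum B I + D))"
    and "0 \<le> t"
  shows "norm (interaction_evolution A (sum B I + D) t
      - interaction_evolution A (sum B I) t * interaction_evolution A D t)
    \<le> integral {0..t} (\<lambda>v. integral {0..v} (\<lambda>s. \<Sum>a\<in>I.
        norm (interaction_picture A (B a) s * interaction_picture A D v
          - interaction_picture A D v * interaction_picture A (B a) s)))"
proof (rule norm_interaction_evolution_add_le[OF A AC AD ACD \<open>0 \<le> t\<close>])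
  let ?D = "interaction_picture A D" and ?B = "\<lambda>a. interaction_picture A (B a)"
  let ?F = "\<lambda>s v. \<Sum>a\<in>I. norm (?B a s * ?D v - ?D v * ?B a s)"
  show "continuous_on {0..t} (\<lambda>v. integral {0..v} (\<lambda>s. ?F s v))"
    by (rule continuous_on_parametric_integral) (simp add: split_beta, intro continuous_intros)
  fix v assume v: "v \<in> {0..t}"
  have "norm (?D v * interaction_evolution A (sum B I) v - interaction_evolution A (sum B I) v * ?D v)
      \<le> integral {0..v} (\<lambda>s. ?F s v)"
  proof (rule norm_commutator_interaction_evolution_le[OF A AC])
    show "0 \<le> v" using v by simp
    show "continuous_on {0..v} (\<lambda>s. ?F s v)" by (intro continuous_intros)
    fix s
    have "?D v * interaction_picture A (sum B I) s - interaction_picture A (sum B I) s * ?D v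
        = (\<Sum>a\<in>I. ?D v * ?B a s - ?B a s * ?D v)"
      by (simp add: interaction_picture_sum sum_distrib_left sum_distrib_right sum_subtractf)
    also have "norm \<dots> \<le> ?F s v"
      by (rule order_trans[OF norm_sum]) (simp add: norm_minus_commute)
    finally show "norm (?D v * interaction_picture A (sum B I) s - interaction_picture A (sum B I) s * ?D v)
        \<le> ?F s v" .
  qed
  then show "norm (interaction_evolution A (sum B I) v * ?D v - ?D v * interaction_evolution A (sum B I) v)
      \<le> integral {0..v} (\<lambda>s. ?F s v)"
    by (simp add: norm_minus_commute)
qed

theorem norm_interaction_evolution_sum_minus_prod_le:
  fixes A :: "'a::{real_normed_algebra_1,banach}" and B :: "nat \<Rightarrow> 'a"
  assumes contractive: "\<And>I. I \<subseteq> {1..n} \<Longrightarrow> generates_contractions (A + sum B I)" and "0 \<le> t"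
  shows "norm (interaction_evolution A (sum B {1..n}) t
      - (\<Prod>b\<leftarrow>[1..<n+1]. interaction_evolution A (B b) t))
    \<le> integral {0..t} (\<lambda>v. integral {0..v} (\<lambda>s.
        \<Sum>(a, b) \<in> {(a, b). 1 \<le> a \<and> a < b \<and> b \<le> n}.
          norm (interaction_picture A (B a) s * interaction_picture A (B b) v
            - interaction_picture A (B b) v * interaction_picture A (B a) s)))"
proof -
  define F where "F a b s v = norm (interaction_picture A (B a) s * interaction_picture A (B b) v
    - interaction_picture A (B b) v * interaction_picture A (B a) s)" for a b s v
  have "norm (interaction_evolution A (sum B {1..n}) t
      - (\<Prod>b\<leftarrow>[1..<n+1]. interaction_evolution A (B b) t))
    \<le> (\<Sum>b\<in>{1..n}. integral {0..t} (\<lambda>v. integral {0..v} (\<lambda>s. \<Sum>a\<in>{1..<b}. F a b s v)))"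
  proof (rule norm_diff_prod_list_le)
    show "interaction_evolution A (sum B {1..0}) t = 1"
      using exp_minus_inverse[of "- (t *\<^sub>R A)"] by (simp add: interaction_evolution_def)
    show "norm (interaction_evolution A (B k) t) \<le> 1" if "k \<in> {1..n}" for k
      using contractive[of "{}"] contractive[of "{k}"] that
      by (intro norm_interaction_evolution_le) auto
    show "norm (interaction_evolution A (sum B {1..Suc k}) t
        - interaction_evolution A (sum B {1..k}) t * interaction_evolution A (B (Suc k)) t)
        \<le> integral {0..t} (\<lambda>v. integral {0..v} (\<lambda>s. \<Sum>a\<in>{1..<Suc k}. F a (Suc k) s v))"
      if "k < n" for k
      using norm_interaction_evolution_sum_add_le[of A B "{1..k}" "B (Suc k)", OF _ _ _ _ \<open>0 \<le> t\<close>]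
        contractive[of "{}"] contractive[of "{1..k}"] contractive[of "{Suc k}"]
        contractive[of "{1..Suc k}"] that
      by (simp add: F_def atLeastLessThanSuc_atLeastAtMost add.assoc)
  qed
  also have "\<dots> = integral {0..t} (\<lambda>v. integral {0..v} (\<lambda>s.
        \<Sum>(a, b) \<in> {(a, b). 1 \<le> a \<and> a < b \<and> b \<le> n}. F a b s v))"
    by (rule sum_integral_parametric_integral_eq) (unfold F_def split_beta, intro continuous_intros)
  finally show ?thesis
    unfolding F_def .
qed

lemma norm_exp_add_minus_mult_le:
  assumes "generates_contractions A"
  shows "norm (exp (t *\<^sub>R (A + C)) - exp (t *\<^sub>R A) * P) \<le> norm (interaction_evolution A C t - P)"
proof -
  have "exp (t *\<^sub>R (A + C)) - exp (t *\<^sub>R A) * P = exp (t *\<^sub>R A) * (interaction_evolution A C t - P)"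
    by (simp add: interaction_evolution_def right_diff_distrib exp_minus_inverse flip: mult.assoc)
  then show ?thesis
    using norm_mult_le_of_norm_le_1_left[OF generates_contractionsD(1)[OF assms]] by simp
qed

section \<open>Complex matrices as a Banach algebra\<close>

lemma opnorm_eq_0_iff: "opnorm A = 0 \<longleftrightarrow> A = 0"
proof -
  have "opnorm A = 0 \<longleftrightarrow> (\<forall>v. A *v v = 0)"
    unfolding opnorm_def by (rule onorm_eq_0) simp
  also have "\<dots> \<longleftrightarrow> A = 0" by (auto simp: matrix_eq)
  finally show ?thesis .
qed

lemma opnorm_triangle: "opnorm (A + B) \<le> opnorm A + opnorm B"
  by (simp add: opnorm_def matrix_vector_mult_add_rdistrib onorm_triangle)

lemma opnorm_scaleR: "opnorm (r *\<^sub>R A) = \<bar>r\<bar> * opnorm A"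
proof -
  have "(\<lambda>v. (r *\<^sub>R A) *v v) = (\<lambda>v. r *\<^sub>R (A *v v))"
    by (simp add: fun_eq_iff matrix_vector_mult_def vec_eq_iff scaleR_sum_right)
  then show ?thesis unfolding opnorm_def by (simp add: onorm_scaleR)
qed

lemma opnorm_mult_le: "opnorm (A ** B) \<le> opnorm A * opnorm B"
proof -
  have "opnorm (A ** B) = onorm ((\<lambda>v. A *v v) \<circ> (\<lambda>v. B *v v))"
    by (simp add: opnorm_def o_def matrix_vector_mul_assoc)
  also have "\<dots> \<le> opnorm A * opnorm B"
    unfolding opnorm_def by (rule onorm_compose) simp_all
  finally show ?thesis .
qed

lemma opnorm_mat_1: "opnorm (mat 1) = 1"
  by (simp add: opnorm_def onorm_id)

lemma norm_entry_le_opnorm: "norm (A $ i $ j) \<le> opnorm A"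
proof -
  have "A $ i $ j = (A *v axis j 1) $ i"
    by (simp add: matrix_vector_mult_def axis_def if_distrib cong: if_cong)
  also have "norm \<dots> \<le> norm (A *v axis j 1)"
    by (rule Finite_Cartesian_Product.norm_nth_le)
  also have "\<dots> \<le> opnorm A * norm (axis j (1::complex))"
    unfolding opnorm_def by (rule onorm) simp
  also have "norm (axis j (1::complex)) = 1"
    by (rule norm_Basis) (simp add: Basis_complex_def)
  finally show ?thesis by simp
qed

lemma norm_le_sum_norm_nth: "norm x \<le> (\<Sum>i\<in>UNIV. norm (x $ i))"
  unfolding norm_vec_def by (rule L2_set_le_sum) simp

lemma norm_le_opnorm: "norm A \<le> real CARD('n) * real CARD('n) * opnorm (A :: 'n::finite cmat)"
proof -
  have "norm A \<le> (\<Sum>i\<in>UNIV. \<Sum>j\<in>UNIV. norm (A $ i $ j))"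
    by (intro order_trans[OF norm_le_sum_norm_nth] sum_mono norm_le_sum_norm_nth)
  also have "\<dots> \<le> (\<Sum>i\<in>(UNIV::'n set). \<Sum>j\<in>(UNIV::'n set). opnorm A)"
    by (intro sum_mono norm_entry_le_opnorm)
  finally show ?thesis by simp
qed

(* The type of matrices carries the Frobenius norm and the componentwise product, so the matrix
   algebra with the operator norm needs a type of its own.  It is only a real algebra: complex
   scalars act through the central elements scalar_op c defined below. *)
typedef ('n::finite) operator = "UNIV :: 'n cmat set"
  morphisms matrix_of Operator ..

setup_lifting type_definition_operator

instantiation operator :: (finite) real_normed_algebra_1
begin

lift_definition zero_operator :: "'a operator" is 0 .

lift_definition one_operator :: "'a operator" is "mat 1" .

lift_definition plus_operator :: "'a operator \<Rightarrow> 'a operator \<Rightarrow> 'a operator" is "(+)" .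

lift_definition minus_operator :: "'a operator \<Rightarrow> 'a operator \<Rightarrow> 'a operator" is "(-)" .

lift_definition uminus_operator :: "'a operator \<Rightarrow> 'a operator" is uminus .

lift_definition times_operator :: "'a operator \<Rightarrow> 'a operator \<Rightarrow> 'a operator" is "(**)" .

lift_definition scaleR_operator :: "real \<Rightarrow> 'a operator \<Rightarrow> 'a operator" is scaleR .

lift_definition norm_operator :: "'a operator \<Rightarrow> real" is opnorm .

definition sgn_operator :: "'a operator \<Rightarrow> 'a operator"
  where "sgn_operator x = inverse (norm x) *\<^sub>R x"

definition dist_operator :: "'a operator \<Rightarrow> 'a operator \<Rightarrow> real"
  where "dist_operator x y = norm (x - y)"

definition uniformity_operator :: "('a operator \<times> 'a operator) filter"
  where "uniformity_operator = (INF e\<in>{0<..}. principal {(x, y). dist x y < e})"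

definition open_operator :: "'a operator set \<Rightarrow> bool"
  where "open_operator U = (\<forall>x\<in>U. \<forall>\<^sub>F (x', y) in uniformity. x' = x \<longrightarrow> y \<in> U)"

instance
proof
  fix a b c :: "'a operator" and r s :: real
  show "a + b + c = a + (b + c)" "a + b = b + a" "0 + a = a" "- a + a = 0" "a - b = a + - b"
    by (transfer, simp add: algebra_simps)+
  show "r *\<^sub>R (a + b) = r *\<^sub>R a + r *\<^sub>R b" "(r + s) *\<^sub>R a = r *\<^sub>R a + s *\<^sub>R a"
    "r *\<^sub>R s *\<^sub>R a = (r * s) *\<^sub>R a" "1 *\<^sub>R a = a"
    by (transfer, simp add: algebra_simps)+
  show "a * b * c = a * (b * c)" by transfer (simp add: matrix_mul_assoc)
  show "(a + b) * c = a * c + b * c"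
    by transfer (simp add: matrix_matrix_mult_def vec_eq_iff distrib_right sum.distrib)
  show "a * (b + c) = a * b + a * c" by transfer (rule matrix_add_ldistrib)
  show "1 * a = a" "a * 1 = a" by (transfer, simp)+
  show "r *\<^sub>R a * b = r *\<^sub>R (a * b)" by transfer (simp add: scalar_matrix_assoc)
  show "a * r *\<^sub>R b = r *\<^sub>R (a * b)" by transfer (simp add: matrix_scalar_ac scalar_matrix_assoc)
  show "(0::'a operator) \<noteq> 1"
    by transfer (auto simp: vec_eq_iff mat_def)
  show "norm a = 0 \<longleftrightarrow> a = 0" by transfer (rule opnorm_eq_0_iff)
  show "norm (a + b) \<le> norm a + norm b" by transfer (rule opnorm_triangle)
  show "norm (r *\<^sub>R a) = \<bar>r\<bar> * norm a" by transfer (rule opnorm_scaleR)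
  show "norm (a * b) \<le> norm a * norm b" by transfer (rule opnorm_mult_le)
  show "norm (1::'a operator) = 1" by transfer (rule opnorm_mat_1)
qed (simp_all add: sgn_operator_def dist_operator_def uniformity_operator_def open_operator_def)

end

lemma bounded_linear_matrix_of: "bounded_linear matrix_of"
proof (rule bounded_linear_intro)
  show "norm (matrix_of a) \<le> norm a * (real CARD('n) * real CARD('n))" for a :: "'n::finite operator"
    using norm_le_opnorm[of "matrix_of a"] by (simp add: norm_operator.rep_eq mult.commute)
qed (simp_all add: plus_operator.rep_eq scaleR_operator.rep_eq)

lemma bounded_linear_Operator: "bounded_linear Operator"
  unfolding linear_conv_bounded_linear[symmetric]
  by (rule linearI) (simp_all add: plus_operator.abs_eq scaleR_operator.abs_eq eq_onp_def)

instance operator :: (finite) banach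
proof
  fix X :: "nat \<Rightarrow> 'a operator"
  assume "Cauchy X"
  then have "Cauchy (\<lambda>k. matrix_of (X k))"
    by (rule bounded_linear.Cauchy[OF bounded_linear_matrix_of])
  then obtain L where "(\<lambda>k. matrix_of (X k)) \<longlonglongrightarrow> L"
    by (auto simp: Cauchy_convergent_iff convergent_def)
  then have "(\<lambda>k. Operator (matrix_of (X k))) \<longlonglongrightarrow> Operator L"
    by (rule bounded_linear.tendsto[OF bounded_linear_Operator])
  then show "convergent X"
    by (auto simp: convergent_def matrix_of_inverse)
qed

lemma matrix_of_power: "matrix_of (a ^ k) = mpow (matrix_of a) k"
  by (induction k) (simp_all add: mpow_def one_operator.rep_eq times_operator.rep_eq)

lemma matrix_of_exp: "matrix_of (exp a) = mexp (matrix_of a)"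
proof -
  have "(\<lambda>k. matrix_of (a ^ k /\<^sub>R fact k)) sums matrix_of (exp a)"
    by (rule bounded_linear.sums[OF bounded_linear_matrix_of exp_converges])
  then show ?thesis
    by (simp add: mexp_def sums_iff scaleR_operator.rep_eq matrix_of_power divide_inverse)
qed

lift_definition adj_op :: "'n::finite operator \<Rightarrow> 'n operator" is adj .

lemma adj_op_mult: "adj_op (a * b) = adj_op b * adj_op a"
  by transfer (simp add: adj_def matrix_matrix_mult_def vec_eq_iff mult.commute)

lemma adj_op_scaleR: "adj_op (r *\<^sub>R a) = r *\<^sub>R adj_op a"
  by transfer (simp add: adj_def vec_eq_iff)

lemma adj_op_one: "adj_op 1 = 1"
  by transfer (simp add: adj_def vec_eq_iff mat_def)

lemma bounded_linear_adj_op: "bounded_linear (adj_op :: 'n::finite operator \<Rightarrow> 'n operator)"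
proof -
  have "linear (adj :: 'n cmat \<Rightarrow> 'n cmat)"
    by (rule linearI) (simp_all add: adj_def vec_eq_iff)
  then have "bounded_linear (Operator \<circ> adj \<circ> (matrix_of :: 'n operator \<Rightarrow> 'n cmat))"
    by (intro bounded_linear_compose[unfolded o_def[symmetric]] bounded_linear_Operator
        bounded_linear_matrix_of) (simp add: linear_conv_bounded_linear)
  also have "Operator \<circ> adj \<circ> matrix_of = adj_op"
    by (simp add: fun_eq_iff adj_op_def)
  finally show ?thesis .
qed

lemma adj_op_exp: "adj_op (exp a) = exp (adj_op a)"
proof -
  have "adj_op (a ^ k) = adj_op a ^ k" for k
    by (induction k) (simp_all add: adj_op_one adj_op_mult power_commutes)
  moreover have "(\<lambda>k. adj_op (a ^ k /\<^sub>R fact k)) sums adj_op (exp a)"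
    by (rule bounded_linear.sums[OF bounded_linear_adj_op exp_converges])
  ultimately have "(\<lambda>k. adj_op a ^ k /\<^sub>R fact k) sums adj_op (exp a)"
    by (simp add: adj_op_scaleR)
  then show ?thesis
    using exp_converges sums_unique2 by blast
qed

lemma of_real_norm_power2_eq_sum_cnj:
  "complex_of_real ((norm (x :: complex ^ 'n::finite))\<^sup>2) = (\<Sum>i\<in>UNIV. cnj (x $ i) * x $ i)"
proof -
  have "(norm x)\<^sup>2 = (\<Sum>i\<in>UNIV. (cmod (x $ i))\<^sup>2)"
    by (simp add: norm_vec_def L2_set_def sum_nonneg)
  then have "complex_of_real ((norm x)\<^sup>2) = (\<Sum>i\<in>UNIV. complex_of_real ((cmod (x $ i))\<^sup>2))"
    by (simp only: of_real_sum)
  also have "\<dots> = (\<Sum>i\<in>UNIV. cnj (x $ i) * x $ i)"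
    by (simp only: complex_norm_square mult.commute)
  finally show ?thesis .
qed

lemma sum_cnj_matrix_vector_mult:
  "(\<Sum>i\<in>UNIV. cnj ((A *v x) $ i) * y $ i) = (\<Sum>j\<in>UNIV. cnj (x $ j) * (adj A *v y) $ j)"
proof -
  have "(\<Sum>i\<in>UNIV. cnj ((A *v x) $ i) * y $ i) = (\<Sum>i\<in>UNIV. \<Sum>j\<in>UNIV. cnj (A $ i $ j) * cnj (x $ j) * y $ i)"
    by (simp add: matrix_vector_mult_def sum_distrib_right)
  also have "\<dots> = (\<Sum>j\<in>UNIV. \<Sum>i\<in>UNIV. cnj (A $ i $ j) * cnj (x $ j) * y $ i)"
    by (rule sum.swap)
  also have "\<dots> = (\<Sum>j\<in>UNIV. cnj (x $ j) * (adj A *v y) $ j)"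
    by (simp add: matrix_vector_mult_def sum_distrib_left adj_def mult_ac)
  finally show ?thesis .
qed

lemma norm_le_1_if_adj_op_mult_eq_1:
  assumes "adj_op u * u = 1"
  shows "norm u \<le> 1"
proof -
  let ?U = "matrix_of u"
  have U: "adj ?U ** ?U = mat 1"
    using arg_cong[OF assms, of matrix_of]
    by (simp add: times_operator.rep_eq adj_op.rep_eq one_operator.rep_eq)
  have "norm (?U *v x) \<le> 1 * norm x" for x
  proof -
    have "complex_of_real ((norm (?U *v x))\<^sup>2) = complex_of_real ((norm x)\<^sup>2)"
      unfolding of_real_norm_power2_eq_sum_cnj sum_cnj_matrix_vector_mult
      by (simp add: matrix_vector_mul_assoc U)
    then have "(norm (?U *v x))\<^sup>2 = (norm x)\<^sup>2"
      by (simp only: of_real_eq_iff)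
    then show ?thesis by simp
  qed
  then show ?thesis
    unfolding norm_operator.rep_eq opnorm_def by (intro onorm_le) simp
qed

lemma generates_contractions_if_adj_op_eq_uminus:
  assumes "adj_op a = - a"
  shows "generates_contractions a"
  unfolding generates_contractions_def
proof
  fix t
  have "adj_op (exp (t *\<^sub>R a)) * exp (t *\<^sub>R a) = 1"
    using exp_minus_inverse[of "- (t *\<^sub>R a)"] by (simp add: adj_op_exp adj_op_scaleR assms)
  then show "norm (exp (t *\<^sub>R a)) \<le> 1"
    by (rule norm_le_1_if_adj_op_mult_eq_1)
qed

lemma mat_mult_eq_cscale: "mat c ** A = cscale c A"
  by (simp add: cscale_def vec_eq_iff matrix_matrix_mult_def mat_def if_distrib if_distribR
      cong: if_cong)

lemma mult_mat_eq_cscale: "A ** mat c = cscale c A"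
  by (simp add: cscale_def vec_eq_iff matrix_matrix_mult_def mat_def if_distrib if_distribR
      mult.commute cong: if_cong)

lift_definition scalar_op :: "complex \<Rightarrow> 'n::finite operator" is mat .

lemma matrix_of_scalar_op_mult: "matrix_of (scalar_op c * a) = cscale c (matrix_of a)"
  by transfer (rule mat_mult_eq_cscale)

lemma scalar_op_commute: "scalar_op c * a = a * scalar_op c"
  by transfer (simp add: mat_mult_eq_cscale mult_mat_eq_cscale)

lemma scalar_op_mult: "scalar_op (c * d) = scalar_op c * scalar_op d"
  by transfer (simp add: mat_mult_eq_cscale, simp add: cscale_def mat_def vec_eq_iff)

lemma scalar_op_of_real: "scalar_op (of_real r) = r *\<^sub>R 1"
  by transfer (simp add: mat_def vec_eq_iff of_real_def)

lemma scalar_op_uminus: "scalar_op (- c) = - scalar_op c"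
  by transfer (simp add: mat_def vec_eq_iff)

lemma adj_op_scalar_op: "adj_op (scalar_op c) = scalar_op (cnj c)"
  by transfer (simp add: adj_def mat_def vec_eq_iff)

(* -i H, so that e^{-itH} corresponds to exp (t *\<^sub>R generator H). *)
definition generator :: "'n::finite cmat \<Rightarrow> 'n operator"
  where "generator H = scalar_op (- \<i>) * Operator H"

lemma adj_op_generator:
  assumes "hermitian H"
  shows "adj_op (generator H) = - generator H"
proof -
  have "adj_op (Operator H) = Operator H"
    using assms by (simp add: hermitian_def adj_op_def Operator_inverse)
  then have "adj_op (generator H) = Operator H * scalar_op \<i>"
    unfolding generator_def adj_op_mult adj_op_scalar_op by simp
  also have "\<dots> = - (Operator H * scalar_op (- \<i>))"
    by (metis minus_minus mult_minus_right scalar_op_uminus)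
  finally show ?thesis
    by (simp add: generator_def scalar_op_commute)
qed

lemma scalar_op_minus_imag_squared: "scalar_op (- \<i>) * scalar_op (- \<i>) = (-1 :: 'n::finite operator)"
  using scalar_op_of_real[of "-1"] by (simp flip: scalar_op_mult)

section \<open>The Trotter-type error bound\<close>

lemma matrix_of_generator: "matrix_of (generator H) = cscale (- \<i>) H"
  by (simp add: generator_def matrix_of_scalar_op_mult Operator_inverse)

lemma matrix_of_scaleR_generators:
  "matrix_of (t *\<^sub>R (generator H0 + (\<Sum>\<gamma>\<in>I. \<alpha> *\<^sub>R generator (H \<gamma>))))
    = cscale (- \<i> * of_real t) (H0 + cscale (of_real \<alpha>) (\<Sum>\<gamma>\<in>I. H \<gamma>))"
  by (simp add: scaleR_operator.rep_eq plus_operator.rep_eq matrix_of_generator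
      linear_sum[OF bounded_linear.linear[OF bounded_linear_matrix_of]])
    (simp add: cscale_def vec_eq_iff sum_distrib_left,
      simp add: scaleR_conv_of_real algebra_simps sum_distrib_left sum_negf)

lemma matrix_of_scaleR_generator: "matrix_of (t *\<^sub>R generator H) = cscale (- \<i> * of_real t) H"
  using matrix_of_scaleR_generators[where I = "{}"] by (simp add: cscale_def)

lemma matrix_of_minus_scaleR_generator:
  "matrix_of (- (t *\<^sub>R generator H)) = cscale (\<i> * of_real t) H"
  using matrix_of_scaleR_generator[of "- t" H] by simp

lemma U_exact_eq:
  "U_exact H0 H1 \<Gamma> \<alpha> t
    = matrix_of (exp (t *\<^sub>R (generator H0 + (\<Sum>\<gamma>\<in>{1..\<Gamma>}. \<alpha> *\<^sub>R generator (H1 \<gamma>)))))"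
  by (simp add: U_exact_def matrix_of_exp matrix_of_scaleR_generators)

lemma oprod_map_matrix_of: "oprod (map (\<lambda>x. matrix_of (f x)) xs) = matrix_of (\<Prod>x\<leftarrow>xs. f x)"
  by (induction xs) (simp_all add: oprod_def one_operator.rep_eq times_operator.rep_eq)

lemma U_apx_eq:
  "U_apx H0 H1 \<Gamma> \<alpha> t = matrix_of (exp (t *\<^sub>R generator H0)
    * (\<Prod>\<gamma>\<leftarrow>[1..<\<Gamma>+1]. interaction_evolution (generator H0) (\<alpha> *\<^sub>R generator (H1 \<gamma>)) t))"
proof -
  have "mexp (cscale (\<i> * of_real t) H0) ** mexp (cscale (- \<i> * of_real t) (H0 + cscale (of_real \<alpha>) (H1 \<gamma>)))
      = matrix_of (interaction_evolution (generator H0) (\<alpha> *\<^sub>R generator (H1 \<gamma>)) t)" for \<gamma>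
    using matrix_of_scaleR_generators[where I = "{\<gamma>}" and H = H1]
    by (simp add: interaction_evolution_def times_operator.rep_eq matrix_of_exp
        matrix_of_minus_scaleR_generator)
  then show ?thesis
    by (simp add: U_apx_def oprod_map_matrix_of times_operator.rep_eq matrix_of_exp
        matrix_of_scaleR_generator)
qed

lemma interaction_eq:
  "interaction H0 H s = matrix_of (interaction_picture (generator H0) (Operator H) s)"
  by (simp add: interaction_def interaction_picture_def times_operator.rep_eq matrix_of_exp
      matrix_of_scaleR_generator matrix_of_minus_scaleR_generator Operator_inverse)

lemma opnorm_commutator: "opnorm (commutator (matrix_of a) (matrix_of b)) = norm (a * b - b * a)"
  by (simp add: commutator_def norm_operator.rep_eq times_operator.rep_eq minus_operator.rep_eq)

lemma norm_commutator_interaction_picture_generators: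
  fixes H0 H H' :: "'n::finite cmat"
  shows "norm (interaction_picture (generator H0) (\<alpha> *\<^sub>R generator H) s
       * interaction_picture (generator H0) (\<alpha> *\<^sub>R generator H') v
     - interaction_picture (generator H0) (\<alpha> *\<^sub>R generator H') v
       * interaction_picture (generator H0) (\<alpha> *\<^sub>R generator H) s)
   = \<alpha>\<^sup>2 * opnorm (commutator (interaction H0 H s) (interaction H0 H' v))"
proof -
  let ?J = "scalar_op (- \<i>)" and ?P = "\<lambda>H s. interaction_picture (generator H0) (Operator H) s"
  have P: "interaction_picture (generator H0) (\<alpha> *\<^sub>R generator H) s = \<alpha> *\<^sub>R (?J * ?P H s)" for H s
    by (simp add: interaction_picture_def generator_def mult.assoc scalar_op_commute)
  have J: "(?J * x) * (?J * y) = - (x * y)" for x y :: "'n operator"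
    using scalar_op_minus_imag_squared
    by (metis minus_mult_commute mult.assoc mult_1 scalar_op_commute)
  have "interaction_picture (generator H0) (\<alpha> *\<^sub>R generator H) s
       * interaction_picture (generator H0) (\<alpha> *\<^sub>R generator H') v
     - interaction_picture (generator H0) (\<alpha> *\<^sub>R generator H') v
       * interaction_picture (generator H0) (\<alpha> *\<^sub>R generator H) s
     = (\<alpha> * \<alpha>) *\<^sub>R (?P H' v * ?P H s - ?P H s * ?P H' v)"
    by (simp only: P mult_scaleR_left mult_scaleR_right scaleR_scaleR J) (simp add: algebra_simps)
  then show ?thesis
    by (simp add: interaction_eq opnorm_commutator power2_eq_square norm_minus_commute)
qed

lemma generates_contractions_generator_sum:
  assumes "hermitian H0" and "\<And>\<gamma>. \<gamma> \<in> I \<Longrightarrow> hermitian (H \<gamma>)"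
  shows "generates_contractions (generator H0 + (\<Sum>\<gamma>\<in>I. \<alpha> *\<^sub>R generator (H \<gamma>)))"
proof (rule generates_contractions_if_adj_op_eq_uminus)
  have linear: "linear adj_op"
    by (rule bounded_linear.linear[OF bounded_linear_adj_op])
  have "adj_op (\<Sum>\<gamma>\<in>I. \<alpha> *\<^sub>R generator (H \<gamma>)) = (\<Sum>\<gamma>\<in>I. - (\<alpha> *\<^sub>R generator (H \<gamma>)))"
    unfolding linear_sum[OF linear] by (rule sum.cong) (simp_all add: adj_op_scaleR adj_op_generator assms)
  then show "adj_op (generator H0 + (\<Sum>\<gamma>\<in>I. \<alpha> *\<^sub>R generator (H \<gamma>)))
      = - (generator H0 + (\<Sum>\<gamma>\<in>I. \<alpha> *\<^sub>R generator (H \<gamma>)))"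
    by (simp add: linear_add[OF linear] adj_op_generator assms sum_negf)
qed

lemma norm_U_exact_minus_U_apx_le:
  fixes H0 :: "'n::finite cmat" and H1 :: "nat \<Rightarrow> 'n cmat"
  assumes "hermitian H0" and "\<And>\<gamma>. \<gamma> \<in> {1..\<Gamma>} \<Longrightarrow> hermitian (H1 \<gamma>)" and "0 \<le> t"
  shows "opnorm (U_exact H0 H1 \<Gamma> \<alpha> t - U_apx H0 H1 \<Gamma> \<alpha> t)
    \<le> \<alpha>\<^sup>2 * integral {0..t} (\<lambda>v. integral {0..v} (\<lambda>s.
          \<Sum>(\<gamma>1, \<gamma>2) \<in> {(a, b). 1 \<le> a \<and> a < b \<and> b \<le> \<Gamma>}.
            opnorm (commutator (interaction H0 (H1 \<gamma>1) s) (interaction H0 (H1 \<gamma>2) v))))"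
proof -
  let ?A = "generator H0" and ?B = "\<lambda>\<gamma>. \<alpha> *\<^sub>R generator (H1 \<gamma>)"
  have contractive: "generates_contractions (?A + sum ?B I)" if "I \<subseteq> {1..\<Gamma>}" for I
    using assms(2) that by (intro generates_contractions_generator_sum[OF assms(1)]) auto
  have "opnorm (U_exact H0 H1 \<Gamma> \<alpha> t - U_apx H0 H1 \<Gamma> \<alpha> t)
      = norm (exp (t *\<^sub>R (?A + sum ?B {1..\<Gamma>}))
          - exp (t *\<^sub>R ?A) * (\<Prod>\<gamma>\<leftarrow>[1..<\<Gamma>+1]. interaction_evolution ?A (?B \<gamma>) t))"
    by (simp add: U_exact_eq U_apx_eq norm_operator.rep_eq minus_operator.rep_eq)
  also have "\<dots> \<le> norm (interaction_evolution ?A (sum ?B {1..\<Gamma>}) t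
      - (\<Prod>\<gamma>\<leftarrow>[1..<\<Gamma>+1]. interaction_evolution ?A (?B \<gamma>) t))"
    using contractive[of "{}"] by (intro norm_exp_add_minus_mult_le) simp
  also have "\<dots> \<le> integral {0..t} (\<lambda>v. integral {0..v} (\<lambda>s.
          \<Sum>(a, b) \<in> {(a, b). 1 \<le> a \<and> a < b \<and> b \<le> \<Gamma>}.
            norm (interaction_picture ?A (?B a) s * interaction_picture ?A (?B b) v
              - interaction_picture ?A (?B b) v * interaction_picture ?A (?B a) s)))"
    by (rule norm_interaction_evolution_sum_minus_prod_le[OF contractive \<open>0 \<le> t\<close>])
  also have "\<dots> = \<alpha>\<^sup>2 * integral {0..t} (\<lambda>v. integral {0..v} (\<lambda>s.
          \<Sum>(\<gamma>1, \<gamma>2) \<in> {(a, b). 1 \<le> a \<and> a < b \<and> b \<le> \<Gamma>}.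
            opnorm (commutator (interaction H0 (H1 \<gamma>1) s) (interaction H0 (H1 \<gamma>2) v))))"
    by (simp add: norm_commutator_interaction_picture_generators case_prod_beta
        flip: sum_distrib_left)
  finally show ?thesis .
qed

lemma integral_commutators_interaction_le:
  fixes H0 :: "'n::finite cmat" and H :: "'i \<Rightarrow> 'n cmat"
  assumes "hermitian H0" and "0 \<le> t"
  shows "integral {0..t} (\<lambda>v. integral {0..v} (\<lambda>s.
      \<Sum>(a, b) \<in> P. opnorm (commutator (interaction H0 (H a) s) (interaction H0 (H b) v))))
    \<le> (\<Sum>(a, b) \<in> P. opnorm (H a) * opnorm (H b)) * t\<^sup>2"
proof -
  let ?P = "\<lambda>a s. interaction_picture (generator H0) (Operator (H a)) s"
  have A: "generates_contractions (generator H0)"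
    using generates_contractions_generator_sum[OF assms(1), of "{}"] by simp
  have "integral {0..t} (\<lambda>v. integral {0..v} (\<lambda>s.
      \<Sum>(a, b) \<in> P. norm (?P a s * ?P b v - ?P b v * ?P a s)))
    \<le> (\<Sum>(a, b) \<in> P. 2 * opnorm (H a) * opnorm (H b)) * t\<^sup>2 / 2"
  proof (rule integral_parametric_integral_le[OF _ _ \<open>0 \<le> t\<close>])
    show "continuous_on UNIV (\<lambda>(s, v). \<Sum>(a, b) \<in> P. norm (?P a s * ?P b v - ?P b v * ?P a s))"
      unfolding split_beta by (intro continuous_intros)
    have "norm (?P a s) \<le> opnorm (H a)" for a s
      using norm_interaction_picture_le[OF A, of "Operator (H a)" s]
      by (simp add: norm_operator.rep_eq Operator_inverse)
    then show "(\<Sum>(a, b) \<in> P. norm (?P a s * ?P b v - ?P b v * ?P a s))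
        \<le> (\<Sum>(a, b) \<in> P. 2 * opnorm (H a) * opnorm (H b))" for s v
      unfolding split_beta
      by (intro sum_mono order_trans[OF norm_commutator_le] mult_mono)
        (auto intro: order_trans[OF norm_ge_zero])
  qed
  then show ?thesis
    by (simp add: interaction_eq opnorm_commutator case_prod_beta mult.assoc flip: sum_distrib_left)
qed

theorem theorem1:
  fixes H0 :: "'n::finite cmat" and H1 :: "nat \<Rightarrow> 'n cmat" and \<Gamma> :: nat
  assumes "hermitian H0"
    and "\<And>\<gamma>. \<gamma> \<in> {1..\<Gamma>} \<Longrightarrow> hermitian (H1 \<gamma>)"
  shows "(\<forall>(\<alpha>::real) (t::real). 0 \<le> t \<longrightarrow>
           opnorm (U_exact H0 H1 \<Gamma> \<alpha> t - U_apx H0 H1 \<Gamma> \<alpha> t)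
           \<le> \<alpha>\<^sup>2 * integral {0..t} (\<lambda>v. integral {0..v} (\<lambda>s.
                 \<Sum>(\<gamma>1, \<gamma>2) \<in> {(a, b). 1 \<le> a \<and> a < b \<and> b \<le> \<Gamma>}.
                   opnorm (commutator (interaction H0 (H1 \<gamma>1) s) (interaction H0 (H1 \<gamma>2) v)))))
       \<and> (\<exists>C::real. \<forall>(\<alpha>::real) (t::real). 0 \<le> t \<longrightarrow>
           opnorm (U_exact H0 H1 \<Gamma> \<alpha> t - U_apx H0 H1 \<Gamma> \<alpha> t) \<le> C * \<alpha>\<^sup>2 * t\<^sup>2)"
proof (intro conjI allI impI exI)
  let ?Pairs = "{(a, b). 1 \<le> a \<and> a < b \<and> b \<le> \<Gamma>}"
  let ?I = "\<lambda>t. integral {0..t} (\<lambda>v. integral {0..v} (\<lambda>s. \<Sum>(\<gamma>1, \<gamma>2) \<in> ?Pairs.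
    opnorm (commutator (interaction H0 (H1 \<gamma>1) s) (interaction H0 (H1 \<gamma>2) v))))"
  let ?C = "\<Sum>(a, b) \<in> ?Pairs. opnorm (H1 a) * opnorm (H1 b)"
  fix \<alpha> t :: real
  assume "0 \<le> t"
  show "opnorm (U_exact H0 H1 \<Gamma> \<alpha> t - U_apx H0 H1 \<Gamma> \<alpha> t) \<le> \<alpha>\<^sup>2 * ?I t"
    by (rule norm_U_exact_minus_U_apx_le[OF assms \<open>0 \<le> t\<close>])
  also have "\<alpha>\<^sup>2 * ?I t \<le> \<alpha>\<^sup>2 * (?C * t\<^sup>2)"
    by (intro mult_left_mono integral_commutators_interaction_le[OF assms(1) \<open>0 \<le> t\<close>]) simp
  finally show "opnorm (U_exact H0 H1 \<Gamma> \<alpha> t - U_apx H0 H1 \<Gamma> \<alpha> t) \<le> ?C * \<alpha>\<^sup>2 * t\<^sup>2"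
    by (simp add: mult_ac)
qed

end
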